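(* Let $M$ be a Malcev algebra over a field of characteristic different from $2$ and $3$, and let $X$ be a generating set of $M$ (as an algebra). If $\mathrm{J}(x,y,z)=0$ for all $x,y,z\in X$, then $\mathrm{J}(u,v,w)=0$ for all $u,v,w\in M$, i.e. $M$ is a Lie algebra.
   Context: A Malcev algebra is an anticommutative algebra (with product written $xy$) satisfying the Malcev identity $(xy)(xz)=((xy)z)x+((yz)x)x+((zx)x)y$. For elements $a,b,c$ of an algebra, the Jacobian is $\mathrm{J}(a,b,c)=(ab)c+(bc)a+(ca)b$. A Lie algebra is an anticommutative algebra in which $\mathrm{J}$ vanishes identically. *)

theory Defs
  imports Main "HOL.Vector_Spaces"
begin

definition bilinear_product :: "('k::field \<Rightarrow> 'm::ab_group_add \<Rightarrow> 'm) \<Rightarrow> ('m \<Rightarrow> 'm \<Rightarrow> 'm) \<Rightarrow> bool" where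
  "bilinear_product s p \<longleftrightarrow>
     (\<forall>x y z. p (x + y) z = p x z + p y z) \<and>
     (\<forall>x y z. p x (y + z) = p x y + p x z) \<and>
     (\<forall>a x y. p (s a x) y = s a (p x y)) \<and>
     (\<forall>a x y. p x (s a y) = s a (p x y))"

definition anticommutative :: "('m::ab_group_add \<Rightarrow> 'm \<Rightarrow> 'm) \<Rightarrow> bool" where
  "anticommutative p \<longleftrightarrow> (\<forall>x. p x x = 0)"

definition malcev_identity :: "('m \<Rightarrow> 'm \<Rightarrow> 'm::ab_group_add) \<Rightarrow> bool" where
  "malcev_identity p \<longleftrightarrow> (\<forall>x y z.
     p (p x y) (p x z) = p (p (p x y) z) x + p (p (p y z) x) x + p (p (p z x) x) y)"

definition malcev_algebra :: "('k::field \<Rightarrow> 'm::ab_group_add \<Rightarrow> 'm) \<Rightarrow> ('m \<Rightarrow> 'm \<Rightarrow> 'm) \<Rightarrow> bool" where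
  "malcev_algebra s p \<longleftrightarrow> vector_space s \<and> bilinear_product s p \<and> anticommutative p \<and> malcev_identity p"

definition jacobian :: "('m::ab_group_add \<Rightarrow> 'm \<Rightarrow> 'm) \<Rightarrow> 'm \<Rightarrow> 'm \<Rightarrow> 'm \<Rightarrow> 'm" where
  "jacobian p a b c = p (p a b) c + p (p b c) a + p (p c a) b"

inductive_set generated_subalgebra :: "('k::field \<Rightarrow> 'm::ab_group_add \<Rightarrow> 'm) \<Rightarrow> ('m \<Rightarrow> 'm \<Rightarrow> 'm) \<Rightarrow> 'm set \<Rightarrow> 'm set"
  for s p X where
  gen: "x \<in> X \<Longrightarrow> x \<in> generated_subalgebra s p X"
| zero: "0 \<in> generated_subalgebra s p X"
| add: "x \<in> generated_subalgebra s p X \<Longrightarrow> y \<in> generated_subalgebra s p X \<Longrightarrow> x + y \<in> generated_subalgebra s p X"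
| scale: "x \<in> generated_subalgebra s p X \<Longrightarrow> s a x \<in> generated_subalgebra s p X"
| mult: "x \<in> generated_subalgebra s p X \<Longrightarrow> y \<in> generated_subalgebra s p X \<Longrightarrow> p x y \<in> generated_subalgebra s p X"

end

theory Submission
  imports Defs
begin

text \<open>Since the Jacobian is trilinear, it suffices to show that it vanishes on products
  (monomials) of generators, by induction on the total degree. For a monomial \<open>wx\<close> and
  monomials \<open>b, c\<close>, Sagle's identity \<open>J(wx,y,z) + 2J(yz,w,x) = J(w,y,z)x + wJ(x,y,z)\<close>,
  a consequence of the polarized Malcev identity in characteristic \<open>\<noteq> 2\<close>, gives
  \<open>A + 2B = 0\<close> and \<open>B + 2A = 0\<close> for \<open>A = J(wx,b,c)\<close> and \<open>B = J(bc,w,x)\<close>, because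
  all Jacobians on the right-hand sides have lower degree. Hence \<open>3A = 0\<close>, and
  characteristic \<open>\<noteq> 3\<close> gives \<open>A = 0\<close>.\<close>

lemma of_nat_neq_0_if_CHAR_neq:
  fixes q :: nat
  assumes "CHAR('a::{semiring_1, zero_neq_one}) \<noteq> q" and "\<And>d. d dvd q \<Longrightarrow> d = 1 \<or> d = q"
  shows "(of_nat q :: 'a) \<noteq> 0"
  using assms by (metis CHAR_not_1 One_nat_def of_nat_eq_0_iff_char_dvd)

lemma two_neq_0_if_CHAR_neq_2:
  assumes "CHAR('a::{semiring_1, zero_neq_one}) \<noteq> 2"
  shows "(2::'a) \<noteq> 0"
proof -
  have "d = 1 \<or> d = 2" if "d dvd 2" for d :: nat
    using that dvd_imp_le[of d 2] by (cases "d = 0") auto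
  then show ?thesis
    using of_nat_neq_0_if_CHAR_neq[OF assms] by simp
qed

lemma three_neq_0_if_CHAR_neq_3:
  assumes "CHAR('a::{semiring_1, zero_neq_one}) \<noteq> 3"
  shows "(3::'a) \<noteq> 0"
proof -
  have "d = 1 \<or> d = 3" if "d dvd 3" for d :: nat
    using that dvd_imp_le[of d 3] by (cases "d = 0"; cases "d = 2") auto
  then show ?thesis
    using of_nat_neq_0_if_CHAR_neq[OF assms] by simp
qed

lemma jacobian_cycle: "jacobian p a b c = jacobian p b c a"
  unfolding jacobian_def by (simp add: ac_simps)

inductive monomial :: "('m \<Rightarrow> 'm \<Rightarrow> 'm) \<Rightarrow> 'm set \<Rightarrow> nat \<Rightarrow> 'm \<Rightarrow> bool"
  for p X where
  generator: "x \<in> X \<Longrightarrow> monomial p X 1 x"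
| product: "monomial p X i x \<Longrightarrow> monomial p X j y \<Longrightarrow> monomial p X (i + j) (p x y)"

lemma monomial_degree_pos: "monomial p X n x \<Longrightarrow> 0 < n"
  by (induction rule: monomial.induct) auto

locale malcev =
  fixes s :: "'k::field \<Rightarrow> 'm::ab_group_add \<Rightarrow> 'm" and p :: "'m \<Rightarrow> 'm \<Rightarrow> 'm"
  assumes malcev_algebra: "malcev_algebra s p"
begin

sublocale vector_space s
  using malcev_algebra by (simp add: malcev_algebra_def)

lemma double_eq_0_iff: "(2::'k) \<noteq> 0 \<Longrightarrow> (a::'m) + a = 0 \<longleftrightarrow> a = 0"
  using scale_left_distrib[of 1 1 a, symmetric] by (simp add: scale_eq_0_iff)

lemma triple_eq_0_iff: "(3::'k) \<noteq> 0 \<Longrightarrow> (a::'m) + a + a = 0 \<longleftrightarrow> a = 0"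
  using scale_left_distrib[of 2 1 a, symmetric] scale_left_distrib[of 1 1 a, symmetric]
  by (simp add: scale_eq_0_iff)

lemma add_left: "p (x + y) z = p x z + p y z"
  and add_right: "p x (y + z) = p x y + p x z"
  and scale_left: "p (s a x) y = s a (p x y)"
  and scale_right: "p x (s a y) = s a (p x y)"
  using malcev_algebra by (simp_all add: malcev_algebra_def bilinear_product_def)

lemma self_zero: "p x x = 0"
  using malcev_algebra by (simp add: malcev_algebra_def anticommutative_def)

lemma malcev_eq: "p (p x y) (p x z) = p (p (p x y) z) x + p (p (p y z) x) x + p (p (p z x) x) y"
  using malcev_algebra by (simp add: malcev_algebra_def malcev_identity_def)

lemma zero_left: "p 0 y = 0"
  using add_left[of 0 0 y] by simp

lemma zero_right: "p y 0 = 0"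
  using add_right[of y 0 0] by simp

lemma minus_left: "p (- x) y = - p x y"
  by (metis add_left add.right_inverse add_eq_0_iff zero_left)

lemma minus_right: "p y (- x) = - p y x"
  by (metis add_right add.right_inverse add_eq_0_iff zero_right)

lemma diff_left: "p (x - y) z = p x z - p y z"
  using add_left[of x "- y" z] by (simp add: minus_left)

lemma diff_right: "p x (y - z) = p x y - p x z"
  using add_right[of x y "- z"] by (simp add: minus_right)

lemma skew: "p x y = - p y x"
proof -
  have "p (x + y) (x + y) = p x y + p y x"
    unfolding add_left add_right by (simp add: self_zero)
  then show ?thesis by (simp add: self_zero eq_neg_iff_add_eq_0)
qed

definition polarized_malcev :: "'m \<Rightarrow> 'm \<Rightarrow> 'm \<Rightarrow> 'm \<Rightarrow> 'm" where
  "polarized_malcev w x y z =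
     p (p w y) (p x z) + p (p x y) (p w z)
     - (p (p (p w y) z) x + p (p (p x y) z) w + p (p (p y z) w) x + p (p (p y z) x) w
        + p (p (p z w) x) y + p (p (p z x) w) y)"

lemma polarized_malcev_eq_0: "polarized_malcev w x y z = 0"
  using malcev_eq[of "w + x" y z] malcev_eq[of w y z] malcev_eq[of x y z]
  unfolding polarized_malcev_def by (simp add: add_left add_right algebra_simps)

lemma sagle_doubled:
  "(jacobian p (p w x) y z + jacobian p (p y z) w x + jacobian p (p y z) w x
     - p (jacobian p w y z) x - p w (jacobian p x y z))
   + (jacobian p (p w x) y z + jacobian p (p y z) w x + jacobian p (p y z) w x
     - p (jacobian p w y z) x - p w (jacobian p x y z)) =
   polarized_malcev w x y z + polarized_malcev w y x z + polarized_malcev w y x z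
   + polarized_malcev w y z x - polarized_malcev w z x y"
proof -
  \<comment> \<open>Oriented instances of anticommutativity, giving \<open>simp\<close> a normal form: letters in the
    order \<open>w, x, y, z\<close>, a letter before a product, and a fixed order on the products of
    pairs that occur.\<close>
  have atoms: "p x w = - p w x" "p y w = - p w y" "p z w = - p w z"
    "p y x = - p x y" "p z x = - p x z" "p z y = - p y z"
    by (rule skew)+
  have products: "\<And>u v. p (p u v) w = - p w (p u v)" "\<And>u v. p (p u v) x = - p x (p u v)"
    "\<And>u v. p (p u v) y = - p y (p u v)" "\<And>u v. p (p u v) z = - p z (p u v)"
    by (rule skew)+
  have pairs: "p (p w z) (p w x) = - p (p w x) (p w z)"
     "p (p x y) (p w z) = - p (p w z) (p x y)"
     "p (p x z) (p w y) = - p (p w y) (p x z)"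
     "p (p y z) (p w x) = - p (p w x) (p y z)"
     "p (p y z) (p x y) = - p (p x y) (p y z)"
    by (rule skew)+
  show ?thesis
    unfolding jacobian_def polarized_malcev_def
    by (simp add: add_left add_right minus_left minus_right diff_left diff_right
        atoms products pairs algebra_simps)
qed

lemma sagle_identity:
  assumes "(2::'k) \<noteq> 0"
  shows "jacobian p (p w x) y z + jacobian p (p y z) w x + jacobian p (p y z) w x
    = p (jacobian p w y z) x + p w (jacobian p x y z)"
proof -
  let ?S = "jacobian p (p w x) y z + jacobian p (p y z) w x + jacobian p (p y z) w x
    - (p (jacobian p w y z) x + p w (jacobian p x y z))"
  have "?S + ?S = 0"
    using sagle_doubled[of w x y z] by (simp add: polarized_malcev_eq_0 diff_diff_eq)
  then show ?thesis
    using double_eq_0_iff[OF assms] by simp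
qed

lemma jacobian_add_left: "jacobian p (x + y) b c = jacobian p x b c + jacobian p y b c"
  unfolding jacobian_def by (simp add: add_left add_right algebra_simps)

lemma jacobian_scale_left: "jacobian p (s r x) b c = s r (jacobian p x b c)"
  unfolding jacobian_def by (simp add: scale_left scale_right scale_right_distrib)

lemma jacobian_zero_left: "jacobian p 0 b c = 0"
  unfolding jacobian_def by (simp add: zero_left zero_right)

lemma jacobian_eq_0_on_span_left:
  assumes "\<And>a. a \<in> M \<Longrightarrow> jacobian p a b c = 0" and "a \<in> span M"
  shows "jacobian p a b c = 0"
  using assms(2)
  by (induction rule: span_induct_alt)
    (simp_all add: assms(1) jacobian_zero_left jacobian_add_left jacobian_scale_left)

lemma jacobian_eq_0_on_span:
  assumes "\<And>a b c. a \<in> M \<Longrightarrow> b \<in> M \<Longrightarrow> c \<in> M \<Longrightarrow> jacobian p a b c = 0"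
    and "a \<in> span M" and "b \<in> span M" and "c \<in> span M"
  shows "jacobian p a b c = 0"
proof -
  have c: "jacobian p c a' b' = 0" if "a' \<in> M" "b' \<in> M" for a' b'
    by (rule jacobian_eq_0_on_span_left[OF _ assms(4)]) (use assms(1) that in blast)
  have b: "jacobian p b c a' = 0" if "a' \<in> M" for a'
  proof (rule jacobian_eq_0_on_span_left[OF _ assms(3)])
    fix b' assume "b' \<in> M"
    then show "jacobian p b' c a' = 0"
      using c[OF that] jacobian_cycle[of p b' c a'] by simp
  qed
  show ?thesis
  proof (rule jacobian_eq_0_on_span_left[OF _ assms(2)])
    fix a' assume "a' \<in> M"
    then show "jacobian p a' b c = 0"
      using b jacobian_cycle[of p a' b c] by simp
  qed
qed

lemma span_product_closed:
  assumes "\<And>x y. x \<in> M \<Longrightarrow> y \<in> M \<Longrightarrow> p x y \<in> M" and "x \<in> span M" and "y \<in> span M"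
  shows "p x y \<in> span M"
proof -
  have "p u y \<in> span M" if "u \<in> M" for u
    using assms(3)
    by (induction rule: span_induct_alt)
      (simp_all add: zero_right add_right scale_right span_zero span_add span_scale
        span_base assms(1) that)
  with assms(2) show ?thesis
    by (induction rule: span_induct_alt)
      (simp_all add: zero_left add_left scale_left span_zero span_add span_scale)
qed

lemma generated_subalgebra_subset_span_monomials:
  "generated_subalgebra s p X \<subseteq> span {a. \<exists>n. monomial p X n a}"
proof
  fix a assume "a \<in> generated_subalgebra s p X"
  then show "a \<in> span {a. \<exists>n. monomial p X n a}"
  proof (induction rule: generated_subalgebra.induct)
    case (gen x)
    then show ?case by (blast intro: span_base monomial.generator)
  next
    case (mult x y)
    then show ?case by (blast intro: span_product_closed monomial.product)
  qed (simp_all add: span_zero span_add span_scale)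
qed

lemma jacobian_product_eq_0:
  assumes two: "(2::'k) \<noteq> 0" and three: "(3::'k) \<noteq> 0"
    and "jacobian p w y z = 0" and "jacobian p x y z = 0"
    and "jacobian p y w x = 0" and "jacobian p z w x = 0"
  shows "jacobian p (p w x) y z = 0"
proof -
  let ?A = "jacobian p (p w x) y z" and ?B = "jacobian p (p y z) w x"
  have AB: "?A + ?B + ?B = 0"
    using sagle_identity[OF two, of w x y z] assms by (simp add: zero_left zero_right)
  have BA: "?B + ?A + ?A = 0"
    using sagle_identity[OF two, of y z w x] assms by (simp add: zero_left zero_right)
  have "?A + ?A + ?A = (?B + ?A + ?A) + (?B + ?A + ?A) - (?A + ?B + ?B)"
    by (simp add: algebra_simps)
  also have "\<dots> = 0"
    unfolding AB BA by simp
  finally show ?thesis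
    by (rule triple_eq_0_iff[OF three, THEN iffD1])
qed

lemma jacobian_monomials:
  assumes "(2::'k) \<noteq> 0" and "(3::'k) \<noteq> 0"
    and generators: "\<And>x y z. x \<in> X \<Longrightarrow> y \<in> X \<Longrightarrow> z \<in> X \<Longrightarrow> jacobian p x y z = 0"
  shows "monomial p X i a \<Longrightarrow> monomial p X j b \<Longrightarrow> monomial p X k c \<Longrightarrow> jacobian p a b c = 0"
proof (induction "i + j + k" arbitrary: i j k a b c rule: less_induct)
  case less
  have product_first: "jacobian p (p w x) b' c' = 0"
    if w: "monomial p X i' w" and x: "monomial p X j' x" and b': "monomial p X k' b'"
      and c': "monomial p X l' c'" and degree: "i' + j' + k' + l' = i + j + k"
    for i' j' k' l' w x b' c'
  proof -
    have "0 < i'" "0 < j'" "0 < k'" "0 < l'"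
      using w x b' c' by (simp_all add: monomial_degree_pos)
    then show ?thesis
      using less.hyps[OF _ w b' c'] less.hyps[OF _ x b' c']
        less.hyps[OF _ b' w x] less.hyps[OF _ c' w x] degree
      by (intro jacobian_product_eq_0[OF assms(1,2)]) simp_all
  qed
  show ?case
    using less.prems(1)
  proof cases
    case a: generator
    show ?thesis
      using less.prems(2)
    proof cases
      case b: generator
      show ?thesis
        using less.prems(3)
      proof cases
        case generator
        then show ?thesis using a b generators by simp
      next
        case (product i' w j' x)
        then have "jacobian p c a b = 0"
          using product_first[of i' w j' x i a j b] a b less.prems by simp
        then show ?thesis
          using jacobian_cycle[of p a b c] jacobian_cycle[of p b c a] by simp
      qed
    next
      case (product i' w j' x)
      then have "jacobian p b c a = 0"
        using product_first[of i' w j' x k c i a] a less.prems by simp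
      then show ?thesis
        using jacobian_cycle[of p a b c] by simp
    qed
  next
    case (product i' w j' x)
    then show ?thesis
      using product_first[of i' w j' x j b k c] less.prems by simp
  qed
qed

end

theorem mainTheorem1:
  fixes s :: "'k::field \<Rightarrow> 'm::ab_group_add \<Rightarrow> 'm"
    and p :: "'m \<Rightarrow> 'm \<Rightarrow> 'm"
    and X :: "'m set"
  assumes "malcev_algebra s p"
    and "CHAR('k) \<noteq> 2" and "CHAR('k) \<noteq> 3"
    and "generated_subalgebra s p X = UNIV"
    and "\<forall>x\<in>X. \<forall>y\<in>X. \<forall>z\<in>X. jacobian p x y z = 0"
  shows "\<forall>u v w. jacobian p u v w = 0"
proof -
  interpret malcev s p
    by unfold_locales (fact assms(1))
  let ?M = "{a. \<exists>n. monomial p X n a}"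
  have two: "(2::'k) \<noteq> 0" and three: "(3::'k) \<noteq> 0"
    using assms(2,3) by (simp_all add: two_neq_0_if_CHAR_neq_2 three_neq_0_if_CHAR_neq_3)
  have generators: "jacobian p x y z = 0" if "x \<in> X" "y \<in> X" "z \<in> X" for x y z
    using assms(5) that by blast
  have monomials: "jacobian p a b c = 0" if "a \<in> ?M" "b \<in> ?M" "c \<in> ?M" for a b c
    using that by (auto intro: jacobian_monomials[OF two three generators])
  have span: "x \<in> span ?M" for x
    using generated_subalgebra_subset_span_monomials[of X] unfolding assms(4) by auto
  show ?thesis
    using jacobian_eq_0_on_span[OF monomials span span span] by simp
qed

end
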